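(* Let $p$ be a prime, $d\ge1$, $g\in L^2(\mathbb{Z}_p^d)$ with $\|g\|_2=1$, and $A,B\subseteq\mathbb{Z}_p^d$. Let $E=\operatorname{supp}(g)$ and assume $g(x)$ is a positive real number for every $x\in E$ (so $g\ge 0$ everywhere). Then the Gabor system $\mathcal{G}(g,A,B)$ is an orthonormal basis of $L^2(\mathbb{Z}_p^d)$ if and only if all of the following hold: (i) $g=|E|^{-1/2}1_E$; (ii) $(E,B)$ is a spectral pair; (iii) $(E,A)$ is a tiling pair.
   Context: $\mathbb{Z}_p$ is the field of integers mod a prime $p$, $\mathbb{Z}_p^d$ the $d$-dimensional vector space over it, and $x\cdot b=\sum_i x_ib_i$. $\chi(t)=e^{2\pi i t/p}$ for $t\in\mathbb{Z}_p$. $L^2(\mathbb{Z}_p^d)$ is the space of functions $\mathbb{Z}_p^d\to\mathbb{C}$ with inner product $\langle f,h\rangle=\sum_{x\in\mathbb{Z}_p^d} f(x)\overline{h(x)}$ (counting measure). For $g\in L^2(\mathbb{Z}_p^d)$ and $A,B\subseteq\mathbb{Z}_p^d$, the Gabor system is $\mathcal{G}(g,A,B)=\{x\mapsto g(x-a)\chi(x\cdot b)\}_{a\in A,\ b\in B}$. $\operatorname{supp}(g)=\{x:g(x)\ne0\}$; $1_E$ is the indicator of $E$. A pair $(E,B)$ is a spectral pair if the functions $\{x\mapsto\chi(x\cdot b)\}_{b\in B}$, restricted to $E$, form an orthogonal basis of $L^2(E)$. A pair $(E,A)$ is a tiling pair if $\sum_{a\in A}1_E(x-a)=1$ for all $x\in\mathbb{Z}_p^d$.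 *)

theory Defs
  imports "HOL-Analysis.Analysis"
begin

text \<open>Z_p^d is modelled as vectors x :: nat => int with 0 <= x i < p for i < d and
  x i = 0 for i >= d. Arithmetic is componentwise mod p.\<close>

definition vecs :: "nat \<Rightarrow> nat \<Rightarrow> (nat \<Rightarrow> int) set" where
  "vecs p d = {x. (\<forall>i<d. 0 \<le> x i \<and> x i < int p) \<and> (\<forall>i\<ge>d. x i = 0)}"

definition vsub :: "nat \<Rightarrow> nat \<Rightarrow> (nat \<Rightarrow> int) \<Rightarrow> (nat \<Rightarrow> int) \<Rightarrow> (nat \<Rightarrow> int)" where
  "vsub p d x y = (\<lambda>i. if i < d then (x i - y i) mod int p else 0)"

definition dotp :: "nat \<Rightarrow> (nat \<Rightarrow> int) \<Rightarrow> (nat \<Rightarrow> int) \<Rightarrow> int" where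
  "dotp d x y = (\<Sum>i<d. x i * y i)"

definition chi :: "nat \<Rightarrow> int \<Rightarrow> complex" where
  "chi p t = exp (2 * complex_of_real pi * \<i> * of_int t / of_nat p)"

definition inner_on :: "'a set \<Rightarrow> ('a \<Rightarrow> complex) \<Rightarrow> ('a \<Rightarrow> complex) \<Rightarrow> complex" where
  "inner_on S f h = (\<Sum>x\<in>S. f x * cnj (h x))"

definition spans_on :: "'a set \<Rightarrow> 'i set \<Rightarrow> ('i \<Rightarrow> 'a \<Rightarrow> complex) \<Rightarrow> bool" where
  "spans_on S I \<phi> \<longleftrightarrow> (\<forall>f. \<exists>c. \<forall>x\<in>S. f x = (\<Sum>i\<in>I. c i * \<phi> i x))"

definition orthonormal_basis_on :: "'a set \<Rightarrow> 'i set \<Rightarrow> ('i \<Rightarrow> 'a \<Rightarrow> complex) \<Rightarrow> bool" where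
  "orthonormal_basis_on S I \<phi> \<longleftrightarrow>
     (\<forall>i\<in>I. \<forall>j\<in>I. inner_on S (\<phi> i) (\<phi> j) = (if i = j then 1 else 0)) \<and> spans_on S I \<phi>"

definition orthogonal_basis_on :: "'a set \<Rightarrow> 'i set \<Rightarrow> ('i \<Rightarrow> 'a \<Rightarrow> complex) \<Rightarrow> bool" where
  "orthogonal_basis_on S I \<phi> \<longleftrightarrow>
     (\<forall>i\<in>I. \<forall>j\<in>I. i \<noteq> j \<longrightarrow> inner_on S (\<phi> i) (\<phi> j) = 0) \<and>
     (\<forall>i\<in>I. inner_on S (\<phi> i) (\<phi> i) \<noteq> 0) \<and> spans_on S I \<phi>"

definition gabor :: "nat \<Rightarrow> nat \<Rightarrow> ((nat \<Rightarrow> int) \<Rightarrow> complex) \<Rightarrow> (nat \<Rightarrow> int) \<Rightarrow> (nat \<Rightarrow> int)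
    \<Rightarrow> (nat \<Rightarrow> int) \<Rightarrow> complex" where
  "gabor p d g a b = (\<lambda>x. g (vsub p d x a) * chi p (dotp d x b))"

definition spectral_pair :: "nat \<Rightarrow> nat \<Rightarrow> (nat \<Rightarrow> int) set \<Rightarrow> (nat \<Rightarrow> int) set \<Rightarrow> bool" where
  "spectral_pair p d E B \<longleftrightarrow> orthogonal_basis_on E B (\<lambda>b x. chi p (dotp d x b))"

definition tiling_pair :: "nat \<Rightarrow> nat \<Rightarrow> (nat \<Rightarrow> int) set \<Rightarrow> (nat \<Rightarrow> int) set \<Rightarrow> bool" where
  "tiling_pair p d E A \<longleftrightarrow>
     (\<forall>x\<in>vecs p d. (\<Sum>a\<in>A. (if vsub p d x a \<in> E then 1 else 0 :: int)) = 1)"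

end

theory Submission
  imports Defs
begin

(* Modulations are unimodular, so |g_{a,b}(x)| = |g(x - a)|. Parseval at a single point x of an
   orthonormal basis gives |B| * sum_{a in A} |g(x - a)|^2 = 1, and orthogonality of g_{a,b} and
   g_{a',b} for a ~= a' forces the nonnegative translates g(. - a) and g(. - a') to have disjoint
   supports. Hence every x lies in exactly one translate a + E, i.e. (E, A) is a tiling pair, and
   |g|^2 = 1/|B| on E; the normalisation gives |E| = |B| and positivity gives g = |E|^(-1/2) 1_E.
   Conversely, once g = |E|^(-1/2) 1_E and A tiles with E, the inner product of g_{a,b} and
   g_{a',b'} vanishes for a ~= a' and is a unimodular multiple of <e_b, e_b'>_{L^2(E)} / |E| for
   a = a', while an expansion at x in the Gabor system is an expansion in the characters e_b on E
   after translating x back into its tile. So the Gabor system is an orthonormal basis exactly when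
   (E, B) is a spectral pair. *)

lemma chi_add: "chi p (s + t) = chi p s * chi p t"
  unfolding chi_def by (simp add: exp_add[symmetric] add_divide_distrib distrib_left distrib_right)

lemma norm_chi [simp]: "norm (chi p t) = 1"
  unfolding chi_def by simp

lemma chi_mult_cnj [simp]: "chi p t * cnj (chi p t) = 1"
  by (metis norm_chi complex_norm_square of_real_1 power_one)

lemma chi_mod_eq:
  assumes "p > 0" and "s mod int p = t mod int p"
  shows "chi p s = chi p t"
proof -
  obtain k where s_eq: "s = t + int p * k"
    using assms(2) by (metis mod_eqE mult.commute)
  have "chi p (int p * k) = exp (2 * of_int k * of_real pi * \<i>)"
    unfolding chi_def using assms(1) by (simp add: field_simps)
  also have "\<dots> = 1"
    using exp_integer_2pi[of "of_int k"] by simp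
  finally show ?thesis
    by (simp add: s_eq chi_add)
qed

abbreviation character :: "nat \<Rightarrow> nat \<Rightarrow> (nat \<Rightarrow> int) \<Rightarrow> (nat \<Rightarrow> int) \<Rightarrow> complex" where
  "character p d b \<equiv> \<lambda>x. chi p (dotp d x b)"

definition vadd :: "nat \<Rightarrow> nat \<Rightarrow> (nat \<Rightarrow> int) \<Rightarrow> (nat \<Rightarrow> int) \<Rightarrow> (nat \<Rightarrow> int)" where
  "vadd p d x y = (\<lambda>i. if i < d then (x i + y i) mod int p else 0)"

lemma finite_vecs: "finite (vecs p d)"
proof -
  let ?ext = "\<lambda>f i. if i < d then f i else 0"
  have "vecs p d \<subseteq> ?ext ` (PiE {..<d} (\<lambda>_. {0..<int p}))"
  proof
    fix x assume x: "x \<in> vecs p d"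
    then have "x = ?ext (restrict x {..<d})" and "restrict x {..<d} \<in> PiE {..<d} (\<lambda>_. {0..<int p})"
      unfolding vecs_def by auto
    then show "x \<in> ?ext ` (PiE {..<d} (\<lambda>_. {0..<int p}))"
      by blast
  qed
  then show ?thesis
    by (rule finite_subset) (intro finite_imageI finite_PiE; simp)
qed

lemma zero_in_vecs: "p > 0 \<Longrightarrow> (\<lambda>_. 0) \<in> vecs p d"
  unfolding vecs_def by auto

lemma vsub_in_vecs: "p > 0 \<Longrightarrow> vsub p d x y \<in> vecs p d"
  unfolding vecs_def vsub_def by auto

lemma vadd_in_vecs: "p > 0 \<Longrightarrow> vadd p d x y \<in> vecs p d"
  unfolding vecs_def vadd_def by auto

lemma vsub_vadd_cancel: "y \<in> vecs p d \<Longrightarrow> vsub p d (vadd p d y a) a = y"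
  unfolding vecs_def vsub_def vadd_def by (auto simp: mod_diff_left_eq)

lemma vadd_vsub_cancel: "x \<in> vecs p d \<Longrightarrow> vadd p d (vsub p d x a) a = x"
  unfolding vecs_def vsub_def vadd_def by (auto simp: mod_add_left_eq)

lemma sum_vecs_translate:
  assumes "p > 0"
  shows "(\<Sum>x\<in>vecs p d. h x) = (\<Sum>y\<in>vecs p d. h (vadd p d y a))"
proof -
  have "bij_betw (\<lambda>y. vadd p d y a) (vecs p d) (vecs p d)"
    by (rule bij_betw_byWitness[where f'="\<lambda>x. vsub p d x a"])
       (auto simp: vsub_vadd_cancel vadd_vsub_cancel vadd_in_vecs vsub_in_vecs assms)
  then show ?thesis
    by (rule sum.reindex_bij_betw[symmetric])
qed

lemma chi_dotp_vadd:
  assumes "p > 0"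
  shows "chi p (dotp d (vadd p d y a) b) = chi p (dotp d y b) * chi p (dotp d a b)"
proof -
  have "dotp d (vadd p d y a) b mod int p = (\<Sum>i<d. (y i + a i) mod int p * b i mod int p) mod int p"
    unfolding dotp_def vadd_def by (simp add: mod_sum_eq)
  also have "\<dots> = (dotp d y b + dotp d a b) mod int p"
    unfolding dotp_def by (simp add: mod_mult_left_eq mod_sum_eq distrib_right sum.distrib)
  finally have "chi p (dotp d (vadd p d y a) b) = chi p (dotp d y b + dotp d a b)"
    by (rule chi_mod_eq[OF assms])
  then show ?thesis
    by (simp only: chi_add)
qed

lemma tiling_pair_iff_unique:
  assumes "finite A"
  shows "tiling_pair p d E A \<longleftrightarrow> (\<forall>x\<in>vecs p d. \<exists>!a\<in>A. vsub p d x a \<in> E)"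
proof -
  have count: "(\<Sum>a\<in>A. if P a then 1 else 0 :: int) = 1 \<longleftrightarrow> (\<exists>!a\<in>A. P a)" for P
  proof -
    have "(\<Sum>a\<in>A. if P a then 1 else 0 :: int) = int (card (A \<inter> {a. P a}))"
      using assms by (simp flip: of_bool_def)
    moreover have "card (A \<inter> {a. P a}) = 1 \<longleftrightarrow> (\<exists>!a\<in>A. P a)"
      unfolding One_nat_def card_1_singleton_iff by (auto simp: set_eq_iff) metis
    ultimately show ?thesis
      by linarith
  qed
  show ?thesis
    unfolding tiling_pair_def count ..
qed

lemma inner_on_character_self: "inner_on E (character p d b) (character p d b) = of_nat (card E)"
  unfolding inner_on_def by simp

lemma orthonormal_coeff_eq_inner:
  assumes "finite I"
    and orth: "\<forall>i\<in>I. \<forall>j\<in>I. inner_on S (\<phi> i) (\<phi> j) = (if i = j then 1 else 0)"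
    and f: "\<forall>x\<in>S. f x = (\<Sum>i\<in>I. c i * \<phi> i x)" and "j \<in> I"
  shows "c j = inner_on S f (\<phi> j)"
proof -
  have "inner_on S f (\<phi> j) = (\<Sum>x\<in>S. (\<Sum>i\<in>I. c i * \<phi> i x) * cnj (\<phi> j x))"
    unfolding inner_on_def using f by simp
  also have "\<dots> = (\<Sum>i\<in>I. c i * inner_on S (\<phi> i) (\<phi> j))"
    unfolding inner_on_def
    by (simp add: sum_distrib_left sum_distrib_right sum.swap[of _ S] mult.assoc)
  also have "\<dots> = (\<Sum>i\<in>I. if i = j then c i else 0)"
    using orth \<open>j \<in> I\<close> by (intro sum.cong) auto
  also have "\<dots> = c j"
    using assms(1,4) by simp
  finally show ?thesis ..
qed

lemma orthonormal_basis_on_sum_norm_sq: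
  assumes "finite S" "finite I" and onb: "orthonormal_basis_on S I \<phi>" and "x \<in> S"
  shows "(\<Sum>i\<in>I. (cmod (\<phi> i x))\<^sup>2) = 1"
proof -
  let ?\<delta> = "\<lambda>z. if z = x then 1 else 0 :: complex"
  have orth: "\<forall>i\<in>I. \<forall>j\<in>I. inner_on S (\<phi> i) (\<phi> j) = (if i = j then 1 else 0)"
    and span: "spans_on S I \<phi>"
    using onb unfolding orthonormal_basis_on_def by blast+
  obtain c where c: "\<forall>z\<in>S. ?\<delta> z = (\<Sum>i\<in>I. c i * \<phi> i z)"
    using span[unfolded spans_on_def, THEN spec, of ?\<delta>] by blast
  have coeff: "c i = cnj (\<phi> i x)" if "i \<in> I" for i
  proof -
    have "c i = inner_on S ?\<delta> (\<phi> i)"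
      using orthonormal_coeff_eq_inner[OF assms(2) orth c that] .
    also have "\<dots> = (\<Sum>z\<in>S. if z = x then cnj (\<phi> i z) else 0)"
      unfolding inner_on_def by (intro sum.cong) auto
    also have "\<dots> = cnj (\<phi> i x)"
      using assms(1,4) by (simp add: sum.delta')
    finally show ?thesis .
  qed
  have "complex_of_real (\<Sum>i\<in>I. (cmod (\<phi> i x))\<^sup>2) = (\<Sum>i\<in>I. \<phi> i x * cnj (\<phi> i x))"
    unfolding of_real_sum complex_norm_square ..
  also have "\<dots> = (\<Sum>i\<in>I. c i * \<phi> i x)"
    by (intro sum.cong) (simp_all add: coeff mult.commute)
  also have "\<dots> = 1"
    using bspec[OF c assms(4)] by simp
  finally show ?thesis
    by (simp only: of_real_eq_1_iff)
qed

lemma gabor_vadd: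
  assumes "p > 0" and "y \<in> vecs p d"
  shows "gabor p d g a b (vadd p d y a) = chi p (dotp d a b) * (g y * chi p (dotp d y b))"
  using assms by (simp add: gabor_def vsub_vadd_cancel chi_dotp_vadd)

lemma norm_gabor: "cmod (gabor p d g a b x) = cmod (g (vsub p d x a))"
  by (simp add: gabor_def norm_mult)

lemma gabor_mult_cnj_same_modulation:
  "gabor p d g a b x * cnj (gabor p d g a' b x) = g (vsub p d x a) * cnj (g (vsub p d x a'))"
proof -
  have "gabor p d g a b x * cnj (gabor p d g a' b x) =
     g (vsub p d x a) * cnj (g (vsub p d x a')) * (chi p (dotp d x b) * cnj (chi p (dotp d x b)))"
    unfolding gabor_def by (simp add: algebra_simps)
  then show ?thesis
    by simp
qed

lemma inner_gabor_same_translation: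
  assumes "p > 0"
  shows "inner_on (vecs p d) (gabor p d g a b) (gabor p d g a b') =
    chi p (dotp d a b) * cnj (chi p (dotp d a b')) *
    inner_on (vecs p d) (\<lambda>y. g y * character p d b y) (\<lambda>y. g y * character p d b' y)"
proof -
  have "inner_on (vecs p d) (gabor p d g a b) (gabor p d g a b') =
      (\<Sum>y\<in>vecs p d. gabor p d g a b (vadd p d y a) * cnj (gabor p d g a b' (vadd p d y a)))"
    unfolding inner_on_def by (rule sum_vecs_translate[OF assms])
  also have "\<dots> = (\<Sum>y\<in>vecs p d. chi p (dotp d a b) * cnj (chi p (dotp d a b')) *
      (g y * chi p (dotp d y b) * cnj (g y * chi p (dotp d y b'))))"
    by (intro sum.cong refl) (simp add: gabor_vadd assms mult_ac)
  finally show ?thesis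
    unfolding inner_on_def by (simp add: sum_distrib_left)
qed

lemma inner_modulated_indicator:
  assumes "E \<subseteq> vecs p d"
    and g_ind: "\<forall>x\<in>vecs p d. g x = (if x \<in> E then complex_of_real (1 / sqrt (real (card E))) else 0)"
  shows "inner_on (vecs p d) (\<lambda>y. g y * character p d b y) (\<lambda>y. g y * character p d b' y) =
    inner_on E (character p d b) (character p d b') / of_nat (card E)"
proof -
  have norm_sq: "complex_of_real (1 / sqrt (real (card E))) * cnj (complex_of_real (1 / sqrt (real (card E))))
      = 1 / of_nat (card E)"
    by (simp flip: of_real_mult)
  have "inner_on (vecs p d) (\<lambda>y. g y * character p d b y) (\<lambda>y. g y * character p d b' y) =
      (\<Sum>y\<in>vecs p d. if y \<in> E then chi p (dotp d y b) * cnj (chi p (dotp d y b')) / of_nat (card E) else 0)"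
    unfolding inner_on_def using g_ind norm_sq
    by (intro sum.cong) (auto simp: algebra_simps)
  also have "\<dots> = inner_on E (character p d b) (character p d b') / of_nat (card E)"
    unfolding inner_on_def sum_divide_distrib
    using assms(1) by (simp add: sum.If_cases finite_vecs Int_absorb1)
  finally show ?thesis .
qed

lemma tiling_pair_tile_exists:
  "finite A \<Longrightarrow> tiling_pair p d E A \<Longrightarrow> x \<in> vecs p d \<Longrightarrow> \<exists>a\<in>A. vsub p d x a \<in> E"
  unfolding tiling_pair_iff_unique by blast

lemma tiling_pair_nonempty:
  assumes "p > 0" "finite A" "tiling_pair p d E A"
  shows "A \<noteq> {}" and "E \<noteq> {}"
  using tiling_pair_tile_exists[OF assms(2,3) zero_in_vecs[OF assms(1)]] by blast+

lemma tiling_pair_other_tiles_vanish: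
  assumes "p > 0" "finite A" "tiling_pair p d E A" and g_vanish: "\<forall>z\<in>vecs p d. z \<notin> E \<longrightarrow> g z = 0"
    and "x \<in> vecs p d" "a0 \<in> A" "vsub p d x a0 \<in> E" "a \<in> A" "a \<noteq> a0"
  shows "g (vsub p d x a) = 0"
proof -
  have "vsub p d x a \<notin> E"
    using assms(3,5-9) unfolding tiling_pair_iff_unique[OF assms(2)] by blast
  then show ?thesis
    using g_vanish vsub_in_vecs[OF assms(1)] by blast
qed

lemma sum_gabor_single_translation:
  assumes "finite A" "a0 \<in> A" and others: "\<forall>a\<in>A. a \<noteq> a0 \<longrightarrow> g (vsub p d x a) = 0"
  shows "(\<Sum>i\<in>A \<times> B. c i * (\<lambda>(a, b). gabor p d g a b) i x) = (\<Sum>b\<in>B. c (a0, b) * gabor p d g a0 b x)"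
proof -
  have "(\<Sum>i\<in>A \<times> B. c i * (\<lambda>(a, b). gabor p d g a b) i x) =
      (\<Sum>a\<in>A. \<Sum>b\<in>B. c (a, b) * gabor p d g a b x)"
    by (auto simp: sum.cartesian_product intro!: sum.cong)
  also have "\<dots> = (\<Sum>b\<in>B. c (a0, b) * gabor p d g a0 b x) +
      (\<Sum>a\<in>A - {a0}. \<Sum>b\<in>B. c (a, b) * gabor p d g a b x)"
    using assms(1,2) by (rule sum.remove)
  also have "(\<Sum>a\<in>A - {a0}. \<Sum>b\<in>B. c (a, b) * gabor p d g a b x) = 0"
    using others by (simp add: gabor_def)
  finally show ?thesis
    by simp
qed

context
  fixes p d :: nat and g :: "(nat \<Rightarrow> int) \<Rightarrow> complex" and A E :: "(nat \<Rightarrow> int) set"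
  assumes p0: "p > 0" and E_vecs: "E \<subseteq> vecs p d" and fin_A: "finite A"
    and g_ind: "\<forall>x\<in>vecs p d. g x = (if x \<in> E then complex_of_real (1 / sqrt (real (card E))) else 0)"
    and tiling: "tiling_pair p d E A"
begin

lemma vanishes_off_support: "\<forall>z\<in>vecs p d. z \<notin> E \<longrightarrow> g z = 0"
  using g_ind by simp

lemma card_support_pos: "card E > 0"
  using tiling_pair_nonempty(2)[OF p0 fin_A tiling] E_vecs finite_subset[OF _ finite_vecs]
  by (auto simp: card_gt_0_iff)

lemma inner_gabor_tiled:
  assumes "a \<in> A" "a' \<in> A"
  shows "inner_on (vecs p d) (gabor p d g a b) (gabor p d g a' b') =
    (if a = a' then chi p (dotp d a b) * cnj (chi p (dotp d a b')) *
       (inner_on E (character p d b) (character p d b') / of_nat (card E)) else 0)"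
proof (cases "a = a'")
  case True
  then show ?thesis
    using inner_gabor_same_translation[OF p0] inner_modulated_indicator[OF E_vecs g_ind] by simp
next
  case False
  have "gabor p d g a b x * cnj (gabor p d g a' b' x) = 0" if "x \<in> vecs p d" for x
  proof -
    have "g (vsub p d x a) = 0 \<or> g (vsub p d x a') = 0"
    proof (cases "vsub p d x a \<in> E")
      case True
      then show ?thesis
        using tiling_pair_other_tiles_vanish[OF p0 fin_A tiling vanishes_off_support that assms(1) True assms(2)] False by simp
    next
      case False
      then show ?thesis
        using g_ind vsub_in_vecs[OF p0] by simp
    qed
    then show ?thesis
      unfolding gabor_def by auto
  qed
  then show ?thesis
    unfolding inner_on_def using False by (simp add: sum.neutral)
qed

lemma gabor_orthonormal_iff:
  "(\<forall>i\<in>A \<times> B. \<forall>j\<in>A \<times> B.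
      inner_on (vecs p d) ((\<lambda>(a, b). gabor p d g a b) i) ((\<lambda>(a, b). gabor p d g a b) j)
      = (if i = j then 1 else 0))
   \<longleftrightarrow> (\<forall>b\<in>B. \<forall>b'\<in>B. b \<noteq> b' \<longrightarrow> inner_on E (character p d b) (character p d b') = 0)"
proof -
  obtain a0 where "a0 \<in> A"
    using tiling_pair_nonempty(1)[OF p0 fin_A tiling] by blast
  have unimodular: "chi p s * cnj (chi p t) \<noteq> 0" for s t
    by (metis chi_mult_cnj mult_eq_0_iff zero_neq_one)
  show ?thesis
    using card_support_pos \<open>a0 \<in> A\<close> unimodular
    by (auto simp: inner_gabor_tiled inner_on_character_self)
qed

lemma gabor_spans_imp_characters_span:
  assumes span: "spans_on (vecs p d) (A \<times> B) (\<lambda>(a, b). gabor p d g a b)"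
  shows "spans_on E B (character p d)"
  unfolding spans_on_def
proof
  fix f :: "(nat \<Rightarrow> int) \<Rightarrow> complex"
  let ?\<kappa> = "complex_of_real (1 / sqrt (real (card E)))"
  obtain a0 where a0: "a0 \<in> A"
    using tiling_pair_nonempty(1)[OF p0 fin_A tiling] by blast
  obtain c where c: "\<forall>x\<in>vecs p d. f (vsub p d x a0) = (\<Sum>i\<in>A \<times> B. c i * (\<lambda>(a, b). gabor p d g a b) i x)"
    using span[unfolded spans_on_def, THEN spec, of "\<lambda>x. f (vsub p d x a0)"] by blast
  have "f y = (\<Sum>b\<in>B. (c (a0, b) * chi p (dotp d a0 b) * ?\<kappa>) * character p d b y)" if "y \<in> E" for y
  proof -
    let ?x = "vadd p d y a0"
    have y: "y \<in> vecs p d"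
      using that E_vecs by blast
    have x: "?x \<in> vecs p d" and cancel: "vsub p d ?x a0 = y"
      using vadd_in_vecs[OF p0] vsub_vadd_cancel[OF y] by blast+
    have "f y = (\<Sum>i\<in>A \<times> B. c i * (\<lambda>(a, b). gabor p d g a b) i ?x)"
      using bspec[OF c x] cancel by simp
    also have "\<dots> = (\<Sum>b\<in>B. c (a0, b) * gabor p d g a0 b ?x)"
      using tiling_pair_other_tiles_vanish[OF p0 fin_A tiling vanishes_off_support x a0] cancel that
      by (intro sum_gabor_single_translation[OF fin_A a0]) auto
    also have "\<dots> = (\<Sum>b\<in>B. (c (a0, b) * chi p (dotp d a0 b) * ?\<kappa>) * character p d b y)"
      using g_ind y that by (intro sum.cong refl) (simp add: gabor_vadd[OF p0 y] mult_ac)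
    finally show ?thesis .
  qed
  then show "\<exists>c. \<forall>y\<in>E. f y = (\<Sum>b\<in>B. c b * character p d b y)"
    by (intro exI[where x = "\<lambda>b. c (a0, b) * chi p (dotp d a0 b) * ?\<kappa>"]) simp
qed

lemma characters_span_imp_gabor_spans:
  assumes span: "spans_on E B (character p d)"
  shows "spans_on (vecs p d) (A \<times> B) (\<lambda>(a, b). gabor p d g a b)"
  unfolding spans_on_def
proof
  fix f :: "(nat \<Rightarrow> int) \<Rightarrow> complex"
  let ?\<kappa> = "complex_of_real (1 / sqrt (real (card E)))"
  have "\<exists>D. \<forall>y\<in>E. f (vadd p d y a) = (\<Sum>b\<in>B. D b * character p d b y)" for a
    using span[unfolded spans_on_def, THEN spec, of "\<lambda>y. f (vadd p d y a)"] .
  then obtain D where D: "\<forall>a. \<forall>y\<in>E. f (vadd p d y a) = (\<Sum>b\<in>B. D a b * character p d b y)"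
    by metis
  define c where "c i = D (fst i) (snd i) * cnj (chi p (dotp d (fst i) (snd i))) / ?\<kappa>" for i
  have "f x = (\<Sum>i\<in>A \<times> B. c i * (\<lambda>(a, b). gabor p d g a b) i x)" if x: "x \<in> vecs p d" for x
  proof -
    obtain a0 where a0: "a0 \<in> A" "vsub p d x a0 \<in> E"
      using tiling_pair_tile_exists[OF fin_A tiling x] by blast
    define y where "y = vsub p d x a0"
    have y: "y \<in> vecs p d" and y_E: "y \<in> E" and x_eq: "x = vadd p d y a0"
      unfolding y_def using vsub_in_vecs[OF p0] a0(2) vadd_vsub_cancel[OF x] by simp_all
    have "(\<Sum>i\<in>A \<times> B. c i * (\<lambda>(a, b). gabor p d g a b) i x) = (\<Sum>b\<in>B. c (a0, b) * gabor p d g a0 b x)"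
      using tiling_pair_other_tiles_vanish[OF p0 fin_A tiling vanishes_off_support x a0]
      by (intro sum_gabor_single_translation[OF fin_A a0(1)]) auto
    also have "\<dots> = (\<Sum>b\<in>B. D a0 b * character p d b y)"
    proof (intro sum.cong refl)
      fix b
      let ?u = "chi p (dotp d a0 b)"
      have "c (a0, b) * gabor p d g a0 b x = D a0 b * character p d b y * (?u * cnj ?u) * (?\<kappa> / ?\<kappa>)"
        unfolding c_def x_eq gabor_vadd[OF p0 y] using g_ind y y_E by (simp add: mult_ac)
      then show "c (a0, b) * gabor p d g a0 b x = D a0 b * character p d b y"
        using card_support_pos by simp
    qed
    also have "\<dots> = f x"
      using D y_E x_eq by simp
    finally show ?thesis ..
  qed
  then show "\<exists>c. \<forall>x\<in>vecs p d. f x = (\<Sum>i\<in>A \<times> B. c i * (\<lambda>(a, b). gabor p d g a b) i x)"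
    by blast
qed

lemma gabor_onb_iff_spectral_pair:
  "orthonormal_basis_on (vecs p d) (A \<times> B) (\<lambda>(a, b). gabor p d g a b) \<longleftrightarrow> spectral_pair p d E B"
  unfolding orthonormal_basis_on_def spectral_pair_def orthogonal_basis_on_def
  using gabor_orthonormal_iff gabor_spans_imp_characters_span characters_span_imp_gabor_spans
    card_support_pos
  by (auto simp: inner_on_character_self)

end

lemma gabor_onb_sum_translates:
  assumes "finite A" "finite B"
    and onb: "orthonormal_basis_on (vecs p d) (A \<times> B) (\<lambda>(a, b). gabor p d g a b)"
    and "x \<in> vecs p d"
  shows "real (card B) * (\<Sum>a\<in>A. (cmod (g (vsub p d x a)))\<^sup>2) = 1"
proof -
  have "1 = (\<Sum>i\<in>A \<times> B. (cmod ((\<lambda>(a, b). gabor p d g a b) i x))\<^sup>2)"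
    using orthonormal_basis_on_sum_norm_sq[OF finite_vecs _ onb assms(4)] assms(1,2) by simp
  also have "\<dots> = (\<Sum>a\<in>A. \<Sum>b\<in>B. (cmod (g (vsub p d x a)))\<^sup>2)"
    unfolding sum.cartesian_product by (intro sum.cong) (auto simp: norm_gabor)
  also have "\<dots> = real (card B) * (\<Sum>a\<in>A. (cmod (g (vsub p d x a)))\<^sup>2)"
    by (simp add: sum_distrib_left)
  finally show ?thesis ..
qed

(* In the order of Complex_Order, g x \<ge> 0 says that g x is real and nonnegative, so the inner
   product below is a sum of nonnegative terms. *)
lemma gabor_onb_translates_disjoint:
  assumes "p > 0"
    and onb: "orthonormal_basis_on (vecs p d) (A \<times> B) (\<lambda>(a, b). gabor p d g a b)"
    and nonneg: "\<forall>x\<in>vecs p d. g x \<ge> 0"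
    and "b \<in> B" "a \<in> A" "a' \<in> A" "a \<noteq> a'" "x \<in> vecs p d"
  shows "g (vsub p d x a) * g (vsub p d x a') = 0"
proof -
  have terms_nonneg: "g (vsub p d z a) * g (vsub p d z a') \<ge> 0" for z
    using nonneg vsub_in_vecs[OF assms(1)] by (simp add: mult_nonneg_nonneg)
  have real: "cnj (g (vsub p d z a')) = g (vsub p d z a')" for z
    using nonneg vsub_in_vecs[OF assms(1)] nonnegative_complex_is_real Reals_cnj_iff by blast
  have "\<forall>i\<in>A \<times> B. \<forall>j\<in>A \<times> B.
      inner_on (vecs p d) ((\<lambda>(a, b). gabor p d g a b) i) ((\<lambda>(a, b). gabor p d g a b) j)
      = (if i = j then 1 else 0)"
    using onb unfolding orthonormal_basis_on_def by blast
  then have "inner_on (vecs p d) (gabor p d g a b) (gabor p d g a' b) = 0"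
    using assms(4-7) by (metis (no_types, lifting) SigmaI case_prod_conv prod.inject)
  then have "(\<Sum>z\<in>vecs p d. g (vsub p d z a) * g (vsub p d z a')) = 0"
    unfolding inner_on_def gabor_mult_cnj_same_modulation real .
  then have "\<forall>z\<in>vecs p d. g (vsub p d z a) * g (vsub p d z a') = 0"
    by (subst (asm) sum_nonneg_eq_0_iff[OF finite_vecs]) (use terms_nonneg in auto)
  then show ?thesis
    using assms(8) by blast
qed

lemma pos_complex_eq_of_real_norm: "(z :: complex) > 0 \<Longrightarrow> z = complex_of_real (cmod z)"
  by (simp add: less_complex_def complex_eq_iff cmod_eq_Re)

context
  fixes p d :: nat and g :: "(nat \<Rightarrow> int) \<Rightarrow> complex" and A B E :: "(nat \<Rightarrow> int) set"
  assumes p0: "p > 0" and fin_A: "finite A" and fin_B: "finite B"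
    and onb: "orthonormal_basis_on (vecs p d) (A \<times> B) (\<lambda>(a, b). gabor p d g a b)"
    and support: "E = {x \<in> vecs p d. g x \<noteq> 0}"
begin

lemma gabor_onb_imp_tiling_pair:
  assumes nonneg: "\<forall>x\<in>vecs p d. g x \<ge> 0"
  shows "tiling_pair p d E A"
  unfolding tiling_pair_iff_unique[OF fin_A]
proof
  fix x assume x: "x \<in> vecs p d"
  have sum_one: "real (card B) * (\<Sum>a\<in>A. (cmod (g (vsub p d x a)))\<^sup>2) = 1"
    by (rule gabor_onb_sum_translates[OF fin_A fin_B onb x])
  then have "(\<Sum>a\<in>A. (cmod (g (vsub p d x a)))\<^sup>2) \<noteq> 0"
    by auto
  then obtain a where a: "a \<in> A" "(cmod (g (vsub p d x a)))\<^sup>2 \<noteq> 0"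
    using sum.neutral[of A "\<lambda>a. (cmod (g (vsub p d x a)))\<^sup>2"] by blast
  then have a_tile: "vsub p d x a \<in> E"
    using support vsub_in_vecs[OF p0] by simp
  have "B \<noteq> {}"
    using sum_one by auto
  then obtain b where b: "b \<in> B"
    by blast
  have "a' = a" if "a' \<in> A" "vsub p d x a' \<in> E" for a'
  proof (rule ccontr)
    assume "a' \<noteq> a"
    then have "g (vsub p d x a) * g (vsub p d x a') = 0"
      using gabor_onb_translates_disjoint[OF p0 onb nonneg b a(1) that(1) _ x] by simp
    then show False
      using a_tile that(2) support by simp
  qed
  then show "\<exists>!a\<in>A. vsub p d x a \<in> E"
    using a(1) a_tile by blast
qed

lemma gabor_onb_support_value:
  assumes tiling: "tiling_pair p d E A" and "y \<in> E"
  shows "real (card B) * (cmod (g y))\<^sup>2 = 1"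
proof -
  have g_vanish: "\<forall>z\<in>vecs p d. z \<notin> E \<longrightarrow> g z = 0"
    using support by blast
  obtain a0 where a0: "a0 \<in> A"
    using tiling_pair_nonempty(1)[OF p0 fin_A tiling] by blast
  let ?x = "vadd p d y a0"
  have x: "?x \<in> vecs p d" and cancel: "vsub p d ?x a0 = y"
    using vadd_in_vecs[OF p0] vsub_vadd_cancel assms(2) support by auto
  have "(\<Sum>a\<in>A. (cmod (g (vsub p d ?x a)))\<^sup>2) =
      (cmod (g y))\<^sup>2 + (\<Sum>a\<in>A - {a0}. (cmod (g (vsub p d ?x a)))\<^sup>2)"
    using sum.remove[OF fin_A a0, of "\<lambda>a. (cmod (g (vsub p d ?x a)))\<^sup>2"] cancel by simp
  also have "(\<Sum>a\<in>A - {a0}. (cmod (g (vsub p d ?x a)))\<^sup>2) = 0"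
    using tiling_pair_other_tiles_vanish[OF p0 fin_A tiling g_vanish x a0] cancel assms(2) by simp
  finally show ?thesis
    using gabor_onb_sum_translates[OF fin_A fin_B onb x] by simp
qed

lemma gabor_onb_imp_normalized_indicator:
  assumes nonneg: "\<forall>x\<in>vecs p d. g x \<ge> 0"
    and tiling: "tiling_pair p d E A"
    and normalized: "(\<Sum>x\<in>vecs p d. (cmod (g x))\<^sup>2) = 1"
  shows "\<forall>x\<in>vecs p d. g x = (if x \<in> E then complex_of_real (1 / sqrt (real (card E))) else 0)"
proof -
  have E_vecs: "E \<subseteq> vecs p d"
    using support by blast
  have norm_sq: "(cmod (g y))\<^sup>2 = 1 / real (card B)" if "y \<in> E" for y
  proof -
    have "real (card B) * (cmod (g y))\<^sup>2 = 1"
      by (rule gabor_onb_support_value[OF tiling that])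
    then show ?thesis
      by (auto simp: eq_divide_eq mult.commute)
  qed
  have "(\<Sum>x\<in>vecs p d. (cmod (g x))\<^sup>2) = (\<Sum>x\<in>vecs p d. if x \<in> E then 1 / real (card B) else 0)"
    using norm_sq support by (intro sum.cong) auto
  also have "\<dots> = real (card E) / real (card B)"
    using E_vecs by (simp add: sum.If_cases finite_vecs Int_absorb1)
  finally have "card E = card B"
    using normalized by (simp add: divide_eq_1_iff)
  have "g y = complex_of_real (1 / sqrt (real (card E)))" if "y \<in> E" for y
  proof -
    have "g y > 0"
      using nonneg that support by (simp add: order_le_neq_trans)
    then have "g y = complex_of_real (cmod (g y))"
      by (rule pos_complex_eq_of_real_norm)
    also have "cmod (g y) = sqrt (1 / real (card E))"
      using norm_sq[OF that] \<open>card E = card B\<close> by (intro real_sqrt_unique[symmetric]) simp_all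
    finally show ?thesis
      by (simp add: real_sqrt_divide)
  qed
  then show ?thesis
    using support by simp
qed

end

theorem theorem1p4:
  fixes p d :: nat and g :: "(nat \<Rightarrow> int) \<Rightarrow> complex" and A B E :: "(nat \<Rightarrow> int) set"
  assumes "prime p" and "d \<ge> 1"
    and "A \<subseteq> vecs p d" and "B \<subseteq> vecs p d"
    and "(\<Sum>x\<in>vecs p d. (cmod (g x))\<^sup>2) = 1"
    and "E = {x \<in> vecs p d. g x \<noteq> 0}"
    and "\<forall>x\<in>E. g x \<in> \<real> \<and> Re (g x) > 0"
  shows "orthonormal_basis_on (vecs p d) (A \<times> B) (\<lambda>(a, b). gabor p d g a b) \<longleftrightarrow>
           (\<forall>x\<in>vecs p d. g x = (if x \<in> E then complex_of_real (1 / sqrt (real (card E))) else 0))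
           \<and> spectral_pair p d E B \<and> tiling_pair p d E A"
proof -
  have p0: "p > 0"
    using assms(1) by (rule prime_gt_0_nat)
  have fin_A: "finite A" and fin_B: "finite B"
    using assms(3,4) finite_vecs by (blast intro: finite_subset)+
  have E_vecs: "E \<subseteq> vecs p d"
    using assms(6) by blast
  have nonneg: "\<forall>x\<in>vecs p d. g x \<ge> 0"
    using assms(6,7) by (auto simp: less_eq_complex_def complex_is_Real_iff)
  show ?thesis
    using gabor_onb_imp_tiling_pair[OF p0 fin_A fin_B _ assms(6) nonneg]
      gabor_onb_imp_normalized_indicator[OF p0 fin_A fin_B _ assms(6) nonneg _ assms(5)]
      gabor_onb_iff_spectral_pair[OF p0 E_vecs fin_A]
    by blast
qed

end
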